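(* In a pre-Hilbert $*$-category, a morphism $a\colon A\to A$ satisfies $a\succ 0$ if and only if $a=x^*x$ for some object $X$ and some isomorphism $x\colon A\to X$.
   Context: A $*$-category is a category with a choice of $f^*\colon Y\to X$ for each $f\colon X\to Y$ such that $1^*=1$, $(gf)^*=f^*g^*$, $(f^* )^*=f$. A pre-Hilbert $*$-category is a $*$-category with (R1) a zero object, (R2) orthonormal biproducts of all pairs of objects (biproducts $(X,s_1,r_1,s_2,r_2)$ with $r_k=s_k^*$), (R3) an isometric kernel (kernel $m$ with $m^*m=1$) for every morphism, and (R4) every diagonal $\Delta\colon X\to X\oplus X$ a kernel of some morphism; such a category is additive. For a Hermitian endomorphism $a$ ($a^*=a$) of $A$, $a\geq 0$ means $a=y^*y$ for some object $Y$ and $y\colon A\to Y$, and $a\succ 0$ means $a\geq 0$ and $a$ is invertible. *)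

theory Defs
  imports Main
begin

text \<open>A (small) category with involution, represented by its morphism type 'm and
object type 'o. Cmp g f is the composite g after f (meaningful when Cod f = Dom g).\<close>

record ('o, 'm) scat =
  Dom :: "'m \<Rightarrow> 'o"
  Cod :: "'m \<Rightarrow> 'o"
  Cmp :: "'m \<Rightarrow> 'm \<Rightarrow> 'm"
  Idt :: "'o \<Rightarrow> 'm"
  Star :: "'m \<Rightarrow> 'm"

definition in_hom :: "('o, 'm) scat \<Rightarrow> 'm \<Rightarrow> 'o \<Rightarrow> 'o \<Rightarrow> bool" where
  "in_hom C f A B \<longleftrightarrow> Dom C f = A \<and> Cod C f = B"

definition is_category :: "('o, 'm) scat \<Rightarrow> bool" where
  "is_category C \<longleftrightarrow>
     (\<forall>A. in_hom C (Idt C A) A A) \<and>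
     (\<forall>f g. Cod C f = Dom C g \<longrightarrow> in_hom C (Cmp C g f) (Dom C f) (Cod C g)) \<and>
     (\<forall>f. Cmp C f (Idt C (Dom C f)) = f \<and> Cmp C (Idt C (Cod C f)) f = f) \<and>
     (\<forall>f g h. Cod C f = Dom C g \<and> Cod C g = Dom C h \<longrightarrow>
        Cmp C h (Cmp C g f) = Cmp C (Cmp C h g) f)"

definition is_star_category :: "('o, 'm) scat \<Rightarrow> bool" where
  "is_star_category C \<longleftrightarrow> is_category C \<and>
     (\<forall>f. in_hom C (Star C f) (Cod C f) (Dom C f)) \<and>
     (\<forall>A. Star C (Idt C A) = Idt C A) \<and>
     (\<forall>f g. Cod C f = Dom C g \<longrightarrow> Star C (Cmp C g f) = Cmp C (Star C f) (Star C g)) \<and>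
     (\<forall>f. Star C (Star C f) = f)"

definition is_iso :: "('o, 'm) scat \<Rightarrow> 'm \<Rightarrow> bool" where
  "is_iso C x \<longleftrightarrow> (\<exists>y. in_hom C y (Cod C x) (Dom C x) \<and>
      Cmp C y x = Idt C (Dom C x) \<and> Cmp C x y = Idt C (Cod C x))"

definition is_zero_obj :: "('o, 'm) scat \<Rightarrow> 'o \<Rightarrow> bool" where
  "is_zero_obj C Z \<longleftrightarrow> (\<forall>A. (\<exists>!f. in_hom C f A Z) \<and> (\<exists>!f. in_hom C f Z A))"

definition is_zero_mor :: "('o, 'm) scat \<Rightarrow> 'm \<Rightarrow> bool" where
  "is_zero_mor C f \<longleftrightarrow> (\<exists>Z g h. is_zero_obj C Z \<and> in_hom C g (Dom C f) Z \<and>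
      in_hom C h Z (Cod C f) \<and> f = Cmp C h g)"

definition is_product :: "('o, 'm) scat \<Rightarrow> 'o \<Rightarrow> 'm \<Rightarrow> 'm \<Rightarrow> 'o \<Rightarrow> 'o \<Rightarrow> bool" where
  "is_product C X r1 r2 A1 A2 \<longleftrightarrow> in_hom C r1 X A1 \<and> in_hom C r2 X A2 \<and>
     (\<forall>Y f1 f2. in_hom C f1 Y A1 \<and> in_hom C f2 Y A2 \<longrightarrow>
        (\<exists>!u. in_hom C u Y X \<and> Cmp C r1 u = f1 \<and> Cmp C r2 u = f2))"

definition is_coproduct :: "('o, 'm) scat \<Rightarrow> 'o \<Rightarrow> 'm \<Rightarrow> 'm \<Rightarrow> 'o \<Rightarrow> 'o \<Rightarrow> bool" where
  "is_coproduct C X s1 s2 A1 A2 \<longleftrightarrow> in_hom C s1 A1 X \<and> in_hom C s2 A2 X \<and>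
     (\<forall>Y f1 f2. in_hom C f1 A1 Y \<and> in_hom C f2 A2 Y \<longrightarrow>
        (\<exists>!u. in_hom C u X Y \<and> Cmp C u s1 = f1 \<and> Cmp C u s2 = f2))"

definition is_biproduct ::
  "('o, 'm) scat \<Rightarrow> 'o \<Rightarrow> 'm \<Rightarrow> 'm \<Rightarrow> 'm \<Rightarrow> 'm \<Rightarrow> 'o \<Rightarrow> 'o \<Rightarrow> bool" where
  "is_biproduct C X s1 r1 s2 r2 A1 A2 \<longleftrightarrow>
     is_product C X r1 r2 A1 A2 \<and> is_coproduct C X s1 s2 A1 A2 \<and>
     Cmp C r1 s1 = Idt C A1 \<and> Cmp C r2 s2 = Idt C A2 \<and>
     is_zero_mor C (Cmp C r2 s1) \<and> is_zero_mor C (Cmp C r1 s2)"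

definition is_kernel :: "('o, 'm) scat \<Rightarrow> 'm \<Rightarrow> 'm \<Rightarrow> bool" where
  "is_kernel C m f \<longleftrightarrow> Cod C m = Dom C f \<and> is_zero_mor C (Cmp C f m) \<and>
     (\<forall>g. Cod C g = Dom C f \<and> is_zero_mor C (Cmp C f g) \<longrightarrow>
        (\<exists>!u. in_hom C u (Dom C g) (Dom C m) \<and> Cmp C m u = g))"

definition is_pre_hilbert_star_category :: "('o, 'm) scat \<Rightarrow> bool" where
  "is_pre_hilbert_star_category C \<longleftrightarrow> is_star_category C \<and>
     \<comment> \<open>(R1)\<close> (\<exists>Z. is_zero_obj C Z) \<and>
     \<comment> \<open>(R2)\<close> (\<forall>A1 A2. \<exists>X s1 s2. is_biproduct C X s1 (Star C s1) s2 (Star C s2) A1 A2) \<and>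
     \<comment> \<open>(R3)\<close> (\<forall>f. \<exists>m. is_kernel C m f \<and> Cmp C (Star C m) m = Idt C (Dom C m)) \<and>
     \<comment> \<open>(R4)\<close> (\<forall>A Y s1 r1 s2 r2 d. is_biproduct C Y s1 r1 s2 r2 A A \<and> in_hom C d A Y \<and>
                 Cmp C r1 d = Idt C A \<and> Cmp C r2 d = Idt C A \<longrightarrow> (\<exists>f. is_kernel C d f))"

definition is_hermitian :: "('o, 'm) scat \<Rightarrow> 'm \<Rightarrow> bool" where
  "is_hermitian C a \<longleftrightarrow> Star C a = a"

definition is_nonneg :: "('o, 'm) scat \<Rightarrow> 'm \<Rightarrow> bool" where
  "is_nonneg C a \<longleftrightarrow> is_hermitian C a \<and>
     (\<exists>Y y. in_hom C y (Dom C a) Y \<and> a = Cmp C (Star C y) y)"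

definition is_pos_def :: "('o, 'm) scat \<Rightarrow> 'm \<Rightarrow> bool" where
  "is_pos_def C a \<longleftrightarrow> is_nonneg C a \<and> is_iso C a"

end

(* If a = y* y has inverse b, then e = y b y* is an idempotent fixing y. A pre-Hilbert
   *-category has isometric equalizers: the equalizer of f and h is the isometric kernel (R3)
   of g <f, h>, where the diagonal of the biproduct (R2) is the kernel of g (R4). With m the
   isometric equalizer of 1 and e, y factors as y = m x, whence a = x* x, x = m* y and
   x b x* = m* e m = m* m = 1. Conversely, if w inverts x then w w* inverts x* x. *)

theory Submission
  imports Defs
begin

locale star_category =
  fixes C :: "('o, 'm) scat"
  assumes star_category: "is_star_category C"
begin

abbreviation comp (infixr "\<cdot>" 55) where "g \<cdot> f \<equiv> Cmp C g f"
abbreviation star ("_\<^sup>\<star>" [1000] 1000) where "f\<^sup>\<star> \<equiv> Star C f"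

lemma category: "is_category C"
  using star_category unfolding is_star_category_def by blast

lemma dom_Idt [simp]: "Dom C (Idt C A) = A"
  and cod_Idt [simp]: "Cod C (Idt C A) = A"
  using category unfolding is_category_def in_hom_def by auto

lemma dom_Cmp [simp]: "Cod C f = Dom C g \<Longrightarrow> Dom C (g \<cdot> f) = Dom C f"
  and cod_Cmp [simp]: "Cod C f = Dom C g \<Longrightarrow> Cod C (g \<cdot> f) = Cod C g"
  using category unfolding is_category_def in_hom_def by auto

lemma Cmp_Idt_right [simp]: "Dom C f = A \<Longrightarrow> f \<cdot> Idt C A = f"
  and Cmp_Idt_left [simp]: "Cod C f = A \<Longrightarrow> Idt C A \<cdot> f = f"
  using category unfolding is_category_def by auto

lemma Cmp_assoc: "Cod C f = Dom C g \<Longrightarrow> Cod C g = Dom C h \<Longrightarrow> h \<cdot> (g \<cdot> f) = (h \<cdot> g) \<cdot> f"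
  using category unfolding is_category_def by auto

lemma dom_Star [simp]: "Dom C (f\<^sup>\<star>) = Cod C f"
  and cod_Star [simp]: "Cod C (f\<^sup>\<star>) = Dom C f"
  and Star_Idt [simp]: "(Idt C A)\<^sup>\<star> = Idt C A"
  and Star_Star [simp]: "(f\<^sup>\<star>)\<^sup>\<star> = f"
  using star_category unfolding is_star_category_def in_hom_def by auto

lemma Star_Cmp: "Cod C f = Dom C g \<Longrightarrow> (g \<cdot> f)\<^sup>\<star> = f\<^sup>\<star> \<cdot> g\<^sup>\<star>"
  using star_category unfolding is_star_category_def by auto

lemma is_zero_mor_Cmp_right:
  assumes "is_zero_mor C f" and "Cod C k = Dom C f"
  shows "is_zero_mor C (f \<cdot> k)"
proof -
  obtain Z g h where Z: "is_zero_obj C Z" and g: "in_hom C g (Dom C f) Z"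
    and h: "in_hom C h Z (Cod C f)" and f: "f = h \<cdot> g"
    using assms(1) unfolding is_zero_mor_def by blast
  have dom: "Dom C g = Dom C f" "Cod C g = Z" "Dom C h = Z"
    using g h by (auto simp: in_hom_def)
  have "f \<cdot> k = h \<cdot> (g \<cdot> k)"
    using f dom assms(2) by (simp add: Cmp_assoc)
  moreover have "in_hom C (g \<cdot> k) (Dom C (f \<cdot> k)) Z" and "Cod C (f \<cdot> k) = Cod C f"
    using dom assms(2) by (auto simp: in_hom_def)
  ultimately show ?thesis
    using Z h unfolding is_zero_mor_def by metis
qed

lemma kernel_factor:
  assumes "is_kernel C m f" and "Cod C z = Cod C m" and "is_zero_mor C (f \<cdot> z)"
  obtains u where "in_hom C u (Dom C z) (Dom C m)" and "m \<cdot> u = z"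
  using assms unfolding is_kernel_def by metis

lemma product_pair:
  assumes "is_product C P r1 r2 A1 A2" and "in_hom C f1 Q A1" and "in_hom C f2 Q A2"
  obtains u where "in_hom C u Q P" and "r1 \<cdot> u = f1" and "r2 \<cdot> u = f2"
  using assms unfolding is_product_def by metis

lemma product_eqI:
  assumes "is_product C P r1 r2 A1 A2" and "in_hom C u Q P" and "in_hom C v Q P"
    and "r1 \<cdot> u = r1 \<cdot> v" and "r2 \<cdot> u = r2 \<cdot> v"
  shows "u = v"
proof -
  have "in_hom C (r1 \<cdot> v) Q A1" "in_hom C (r2 \<cdot> v) Q A2"
    using assms(1,3) unfolding is_product_def in_hom_def by auto
  then show ?thesis
    using assms unfolding is_product_def by metis
qed

lemma is_iso_Star_Cmp_self:
  assumes "is_iso C x"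
  shows "is_iso C (x\<^sup>\<star> \<cdot> x)"
proof -
  obtain w where w: "in_hom C w (Cod C x) (Dom C x)"
    and wx: "w \<cdot> x = Idt C (Dom C x)" and xw: "x \<cdot> w = Idt C (Cod C x)"
    using assms unfolding is_iso_def by blast
  have dw: "Dom C w = Cod C x" "Cod C w = Dom C x"
    using w by (auto simp: in_hom_def)
  have "(w \<cdot> w\<^sup>\<star>) \<cdot> (x\<^sup>\<star> \<cdot> x) = w \<cdot> ((x \<cdot> w)\<^sup>\<star> \<cdot> x)"
    using dw by (simp add: Cmp_assoc Star_Cmp)
  also have "\<dots> = Idt C (Dom C x)"
    using xw wx dw by simp
  finally have left: "(w \<cdot> w\<^sup>\<star>) \<cdot> (x\<^sup>\<star> \<cdot> x) = Idt C (Dom C x)" .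
  have "(x\<^sup>\<star> \<cdot> x) \<cdot> (w \<cdot> w\<^sup>\<star>) = x\<^sup>\<star> \<cdot> ((x \<cdot> w) \<cdot> w\<^sup>\<star>)"
    using dw by (simp add: Cmp_assoc)
  also have "\<dots> = (w \<cdot> x)\<^sup>\<star>"
    using xw dw by (simp add: Star_Cmp)
  also have "\<dots> = Idt C (Dom C x)"
    using wx by simp
  finally have right: "(x\<^sup>\<star> \<cdot> x) \<cdot> (w \<cdot> w\<^sup>\<star>) = Idt C (Dom C x)" .
  show ?thesis
    unfolding is_iso_def
    using left right dw by (intro exI[of _ "w \<cdot> w\<^sup>\<star>"]) (simp add: in_hom_def)
qed

lemma is_nonneg_Star_Cmp_self: "is_nonneg C (x\<^sup>\<star> \<cdot> x)"
  unfolding is_nonneg_def is_hermitian_def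
  by (auto simp: Star_Cmp in_hom_def)

lemma is_pos_def_Star_Cmp_self: "is_iso C x \<Longrightarrow> is_pos_def C (x\<^sup>\<star> \<cdot> x)"
  unfolding is_pos_def_def by (simp add: is_iso_Star_Cmp_self is_nonneg_Star_Cmp_self)

end

locale pre_hilbert_star_category = star_category +
  assumes pre_hilbert: "is_pre_hilbert_star_category C"
begin

lemma orthonormal_biproduct_exists:
  obtains X s1 s2 where "is_biproduct C X s1 (s1\<^sup>\<star>) s2 (s2\<^sup>\<star>) A1 A2"
  using pre_hilbert unfolding is_pre_hilbert_star_category_def by blast

lemma isometric_kernel_exists:
  obtains m where "is_kernel C m f" and "m\<^sup>\<star> \<cdot> m = Idt C (Dom C m)"
  using pre_hilbert unfolding is_pre_hilbert_star_category_def by blast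

lemma diagonal_is_kernel:
  assumes "is_biproduct C Y s1 r1 s2 r2 A A" and "in_hom C d A Y"
    and "r1 \<cdot> d = Idt C A" and "r2 \<cdot> d = Idt C A"
  obtains g where "is_kernel C d g"
  using pre_hilbert assms unfolding is_pre_hilbert_star_category_def by blast

lemma isometric_equalizer_exists:
  assumes f: "in_hom C f Y Z" and h: "in_hom C h Y Z"
  obtains X m where "in_hom C m X Y" and "m\<^sup>\<star> \<cdot> m = Idt C X" and "f \<cdot> m = h \<cdot> m"
    and "\<And>z. Cod C z = Y \<Longrightarrow> f \<cdot> z = h \<cdot> z \<Longrightarrow> \<exists>u. in_hom C u (Dom C z) X \<and> m \<cdot> u = z"
proof -
  obtain P s1 s2 where bp: "is_biproduct C P s1 (s1\<^sup>\<star>) s2 (s2\<^sup>\<star>) Z Z"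
    by (rule orthonormal_biproduct_exists)
  define r1 r2 where "r1 = s1\<^sup>\<star>" and "r2 = s2\<^sup>\<star>"
  have prod: "is_product C P r1 r2 Z Z"
    using bp unfolding is_biproduct_def r1_def r2_def by blast
  then have r: "Dom C r1 = P" "Cod C r1 = Z" "Dom C r2 = P" "Cod C r2 = Z"
    unfolding is_product_def in_hom_def by auto
  obtain d where d: "in_hom C d Z P" "r1 \<cdot> d = Idt C Z" "r2 \<cdot> d = Idt C Z"
    using product_pair[OF prod, of "Idt C Z" Z "Idt C Z"] by (auto simp: in_hom_def)
  obtain g where g: "is_kernel C d g"
    using diagonal_is_kernel[OF bp] d unfolding r1_def r2_def by blast
  obtain p where p: "in_hom C p Y P" "r1 \<cdot> p = f" "r2 \<cdot> p = h"
    using product_pair[OF prod f h] .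
  obtain m where m: "is_kernel C m (g \<cdot> p)" and iso: "m\<^sup>\<star> \<cdot> m = Idt C (Dom C m)"
    by (rule isometric_kernel_exists)
  have dom: "Dom C d = Z" "Cod C d = P" "Dom C p = Y" "Cod C p = P"
    "Dom C f = Y" "Cod C f = Z" "Dom C h = Y" "Cod C h = Z"
    using d p f h unfolding in_hom_def by auto
  have dom_g: "Dom C g = P" and gd: "is_zero_mor C (g \<cdot> d)"
    using g dom unfolding is_kernel_def by auto
  have cod_m: "Cod C m = Y"
    using m dom dom_g unfolding is_kernel_def by simp
  have factor: "\<exists>u. in_hom C u (Dom C z) (Dom C m) \<and> m \<cdot> u = z"
    if z: "Cod C z = Y" "f \<cdot> z = h \<cdot> z" for z
  proof -
    have "p \<cdot> z = d \<cdot> (f \<cdot> z)"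
      by (rule product_eqI[OF prod, where Q = "Dom C z"])
        (use z dom r d p in \<open>simp_all add: in_hom_def Cmp_assoc\<close>)
    then have "(g \<cdot> p) \<cdot> z = (g \<cdot> d) \<cdot> (f \<cdot> z)"
      using z dom dom_g Cmp_assoc[of z p g] Cmp_assoc[of "f \<cdot> z" d g] by simp
    then have "is_zero_mor C ((g \<cdot> p) \<cdot> z)"
      using is_zero_mor_Cmp_right[OF gd, of "f \<cdot> z"] z dom dom_g by simp
    moreover have "Cod C z = Cod C m"
      using z cod_m by simp
    ultimately show ?thesis
      by (metis kernel_factor[OF m])
  qed
  obtain u where u: "in_hom C u (Dom C m) Z" and du: "d \<cdot> u = p \<cdot> m"
  proof -
    have "(g \<cdot> p) \<cdot> m = g \<cdot> (p \<cdot> m)"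
      using dom dom_g cod_m by (simp add: Cmp_assoc)
    moreover have "is_zero_mor C ((g \<cdot> p) \<cdot> m)"
      using m unfolding is_kernel_def by blast
    ultimately obtain u where "in_hom C u (Dom C (p \<cdot> m)) (Dom C d)" "d \<cdot> u = p \<cdot> m"
      using kernel_factor[OF g, of "p \<cdot> m"] dom cod_m by auto
    then show ?thesis
      using that dom cod_m by simp
  qed
  have "f \<cdot> m = r1 \<cdot> (d \<cdot> u)" "h \<cdot> m = r2 \<cdot> (d \<cdot> u)"
    using p(2,3) du dom r cod_m by (simp_all add: Cmp_assoc)
  then have "f \<cdot> m = h \<cdot> m"
    using d u dom r by (simp add: Cmp_assoc in_hom_def)
  then show ?thesis
    using that[of m "Dom C m"] cod_m iso factor by (simp add: in_hom_def)
qed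

lemma pos_def_factors_through_iso:
  assumes a: "in_hom C a A A" and pos: "is_pos_def C a"
  shows "\<exists>X x. in_hom C x A X \<and> is_iso C x \<and> a = x\<^sup>\<star> \<cdot> x"
proof -
  obtain Y y where y: "in_hom C y A Y" and ay: "a = y\<^sup>\<star> \<cdot> y"
    using pos a unfolding is_pos_def_def is_nonneg_def in_hom_def by auto
  obtain b where b: "in_hom C b A A" "b \<cdot> a = Idt C A" "a \<cdot> b = Idt C A"
    using pos a unfolding is_pos_def_def is_iso_def in_hom_def by auto
  have dom: "Dom C y = A" "Cod C y = Y" "Dom C b = A" "Cod C b = A"
    using y b by (auto simp: in_hom_def)
  define e where "e = y \<cdot> (b \<cdot> y\<^sup>\<star>)"
  have e: "in_hom C e Y Y"
    using dom by (simp add: e_def in_hom_def)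
  have "e \<cdot> y = y \<cdot> (b \<cdot> a)"
    using ay dom by (simp add: e_def Cmp_assoc)
  then have ey: "e \<cdot> y = y"
    using b(2) dom by simp
  obtain X m where m: "in_hom C m X Y" and mm: "m\<^sup>\<star> \<cdot> m = Idt C X" and em: "Idt C Y \<cdot> m = e \<cdot> m"
    and factor: "\<And>z. Cod C z = Y \<Longrightarrow> Idt C Y \<cdot> z = e \<cdot> z \<Longrightarrow> \<exists>u. in_hom C u (Dom C z) X \<and> m \<cdot> u = z"
    using isometric_equalizer_exists[of "Idt C Y" Y Y e] e by (auto simp: in_hom_def)
  obtain x where x: "in_hom C x A X" and mx: "m \<cdot> x = y"
    using factor[of y] ey dom by auto
  have dom': "Dom C m = X" "Cod C m = Y" "Dom C x = A" "Cod C x = X"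
    using m x by (auto simp: in_hom_def)
  have "m\<^sup>\<star> \<cdot> y = (m\<^sup>\<star> \<cdot> m) \<cdot> x"
    using mx dom' by (auto simp: Cmp_assoc)
  then have x_eq: "x = m\<^sup>\<star> \<cdot> y"
    using mm dom' by simp
  have ax: "a = x\<^sup>\<star> \<cdot> x"
  proof -
    have "a = (m \<cdot> x)\<^sup>\<star> \<cdot> (m \<cdot> x)"
      using ay mx by simp
    also have "\<dots> = x\<^sup>\<star> \<cdot> ((m\<^sup>\<star> \<cdot> m) \<cdot> x)"
      using dom' by (simp add: Star_Cmp Cmp_assoc)
    finally show ?thesis
      using mm dom' by simp
  qed
  have "x \<cdot> (b \<cdot> x\<^sup>\<star>) = m\<^sup>\<star> \<cdot> (e \<cdot> m)"
    using x_eq dom dom' by (simp add: e_def Star_Cmp Cmp_assoc)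
  also have "\<dots> = Idt C X"
    using em mm dom' by simp
  finally have "is_iso C x"
    unfolding is_iso_def using b(2) ax dom dom'
    by (intro exI[of _ "b \<cdot> x\<^sup>\<star>"]) (simp add: in_hom_def Cmp_assoc)
  then show ?thesis
    using x ax by blast
qed

end

theorem proposition6p3:
  fixes C :: "('o, 'm) scat" and a :: 'm and A :: 'o
  assumes "is_pre_hilbert_star_category C"
    and "in_hom C a A A"
  shows "is_pos_def C a \<longleftrightarrow>
    (\<exists>X x. in_hom C x A X \<and> is_iso C x \<and> a = Cmp C (Star C x) x)"
proof -
  interpret pre_hilbert_star_category C
    using assms(1) by unfold_locales (simp_all add: is_pre_hilbert_star_category_def)
  show ?thesis
    using pos_def_factors_through_iso[OF assms(2)] is_pos_def_Star_Cmp_self by blast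
qed

end
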